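(* Let $k\ge1$, $n=2k-1$, $T^n=(\mathbb{R}/k\mathbb{Z})^n$, let $X_0=\{\mathbf{x}_\sigma:\mathbf{x}\in[0,1]^2\times[0,2]^2\times\cdots\times[0,k-1]^2\times[0,k],\ \sigma\in S_n\}\subset T^n$ and $X_i=X_0+(i,\dots,i)$ for $i\in\mathbb{Z}_k$. Then $X_0\cup X_1\cup\cdots\cup X_{k-1}=T^n$.
   Context: $\mathbf{x}_\sigma=(x_{\sigma(1)},\dots,x_{\sigma(n)})$ for $\sigma\in S_n$; $[0,j]^2$ denotes two Cartesian factors equal to $[0,j]$, so the product has $n$ factors; products of real intervals are regarded as subsets of $T^n$ via the quotient map $\mathbb{R}^n\to(\mathbb{R}/k\mathbb{Z})^n$; $X_0+(i,\dots,i)=\{\mathbf{x}+(i,\dots,i):\mathbf{x}\in X_0\}$. *)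

theory Defs
  imports Complex_Main "HOL-Combinatorics.Permutations"
begin

text \<open>Points of T^n = (R/kZ)^n are represented by real vectors (functions on {0..<n},
  values outside irrelevant); two vectors represent the same point iff they agree
  coordinatewise modulo k.\<close>

definition torus_eq :: "nat \<Rightarrow> nat \<Rightarrow> (nat \<Rightarrow> real) \<Rightarrow> (nat \<Rightarrow> real) \<Rightarrow> bool" where
  "torus_eq k n y z \<longleftrightarrow> (\<forall>j<n. \<exists>m::int. y j - z j = real_of_int m * real k)"

text \<open>The box [0,1]^2 x [0,2]^2 x ... x [0,k-1]^2 x [0,k] (0-based coordinate j has
  upper bound j div 2 + 1), with n = 2k-1 coordinates.\<close>

definition box :: "nat \<Rightarrow> (nat \<Rightarrow> real) set" where
  "box k = {x. \<forall>j<2*k-1. 0 \<le> x j \<and> x j \<le> real (j div 2 + 1)}"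

definition X0 :: "nat \<Rightarrow> (nat \<Rightarrow> real) set" where
  "X0 k = {(\<lambda>j. x (\<sigma> j)) | x \<sigma>. x \<in> box k \<and> \<sigma> permutes {..<2*k-1}}"

definition Xi :: "nat \<Rightarrow> nat \<Rightarrow> (nat \<Rightarrow> real) set" where
  "Xi k i = {(\<lambda>j. x j + real i) | x. x \<in> X0 k}"

end

theory Submission
  imports Defs "HOL-Library.Real_Mod"
begin

text \<open>Shift y by some i \<in> Z_k and reduce modulo k, giving w = (y - i) mod k with
  coordinates in [0, k). Let N_s count the coordinates whose integer part is congruent to s
  mod k. The values N_s - 2 sum to -1 over one period, so by the cycle lemma some rotation i
  makes all their partial sums nonnegative; then for every t < k at least 2t coordinates of w
  lie below t. Consequently the m-th smallest coordinate of w is at most m div 2 + 1, so w is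
  a permutation of a point of the box: w \<in> X_0, and y is congruent to w + i \<in> X_i.\<close>

lemma exists_rotation_nonneg_partial_sums:
  fixes f :: "nat \<Rightarrow> int"
  assumes "0 < k" and periodic: "\<And>s. f (s + k) = f s" and total: "-1 \<le> (\<Sum>s<k. f s)"
  shows "\<exists>i<k. \<forall>t<k. 0 \<le> (\<Sum>s<t. f (i + s))"
proof -
  define P where "P m = (\<Sum>s<m. f s)" for m
  have P_add_period: "P (m + k) = P m + P k" for m
    by (induction m) (simp_all add: P_def periodic add.commute)
  have partial_sum: "(\<Sum>s<t. f (i + s)) = P (i + t) - P i" for i t
    by (induction t) (simp_all add: P_def)
  have "\<exists>i. i < k \<and> (\<forall>j<k. P i \<le> P j)"
    using ex_min_if_finite[of "P ` {..<k}"] \<open>0 < k\<close> by (auto simp: not_less)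
  then obtain i where i: "i < k" and min: "\<forall>j<k. P i \<le> P j"
    and least: "\<forall>j<i. \<not> (j < k \<and> (\<forall>j'<k. P j \<le> P j'))"
    using exists_least_iff[of "\<lambda>i. i < k \<and> (\<forall>j<k. P i \<le> P j)"] by blast
  have first: "P i < P j" if "j < i" for j
    using least i min that by force
  \<comment> \<open>Past the end of the period the prefix sums drop by at most 1; this is absorbed
    because i is the first index where P attains its minimum.\<close>
  have "P i \<le> P (i + t)" if "t < k" for t
  proof (cases "i + t < k")
    case False
    then obtain j where "i + t = j + k" "j < i"
      using \<open>t < k\<close> by (metis add.commute add_less_cancel_left le_add_diff_inverse not_le)
    then show ?thesis
      using first[of j] total P_add_period[of j] by (simp add: P_def)
  qed (use min in blast)
  then show ?thesis
    using i partial_sum by auto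
qed

lemma card_less_eq_sum_card_eq:
  fixes g :: "'a \<Rightarrow> nat"
  assumes "finite A"
  shows "card {a\<in>A. g a < t} = (\<Sum>s<t. card {a\<in>A. g a = s})"
proof (induction t)
  case (Suc t)
  have "{a\<in>A. g a < Suc t} = {a\<in>A. g a < t} \<union> {a\<in>A. g a = t}"
    by auto
  then show ?case
    using Suc assms by (simp add: card_Un_disjoint disjoint_iff)
qed simp

lemma exists_permutation_below_bounds:
  fixes w \<beta> :: "nat \<Rightarrow> 'a::linorder"
  assumes many_below: "\<And>m. m < n \<Longrightarrow> m < card {j. j < n \<and> w j \<le> \<beta> m}"
  shows "\<exists>\<pi>. \<pi> permutes {..<n} \<and> (\<forall>m<n. w (\<pi> m) \<le> \<beta> m)"
proof -
  define L where "L = sort_key w [0..<n]"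
  have L: "set L = {..<n}" "distinct L" "length L = n" "sorted (map w L)"
    unfolding L_def by (auto simp: length_sort)
  define \<pi> where "\<pi> m = (if m < n then L ! m else m)" for m
  have "bij_betw ((!) L) {..<n} {..<n}"
    using bij_betw_nth[OF L(2)] L(1,3) by simp
  then have "bij_betw \<pi> {..<n} {..<n}"
    by (rule bij_betw_cong[THEN iffD1, rotated]) (simp add: \<pi>_def)
  then have perm: "\<pi> permutes {..<n}"
    by (rule bij_imp_permutes) (simp add: \<pi>_def)
  have mono: "w (\<pi> m) \<le> w (\<pi> m')" if "m \<le> m'" "m' < n" for m m'
    using sorted_nth_mono[OF L(4) that(1)] that L(3) by (simp add: \<pi>_def)
  have "w (\<pi> m) \<le> \<beta> m" if "m < n" for m
  proof (rule ccontr)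
    assume above: "\<not> w (\<pi> m) \<le> \<beta> m"
    have "{j. j < n \<and> w j \<le> \<beta> m} \<subseteq> \<pi> ` {..<m}"
    proof
      fix j assume j: "j \<in> {j. j < n \<and> w j \<le> \<beta> m}"
      then obtain m' where "m' < n" "j = \<pi> m'"
        using permutes_image[OF perm] by (metis (no_types, lifting) imageE lessThan_iff mem_Collect_eq)
      moreover from this have "m' < m"
        using mono[of m m'] above j by force
      ultimately show "j \<in> \<pi> ` {..<m}"
        by auto
    qed
    then have "card {j. j < n \<and> w j \<le> \<beta> m} \<le> m"
      by (metis card_image_le card_lessThan card_mono finite_imageI finite_lessThan le_trans)
    with many_below[OF that] show False
      by simp
  qed
  with perm show ?thesis
    by blast
qed

lemma floor_rmod_of_nat:
  assumes "0 < k"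
  shows "\<lfloor>x rmod real k\<rfloor> = \<lfloor>x\<rfloor> mod int k"
proof -
  have "\<lfloor>x / real k\<rfloor> = \<lfloor>x\<rfloor> div int k"
    using floor_divide_real_eq_div[of "int k" x] by simp
  then have "\<lfloor>x rmod real k\<rfloor> = \<lfloor>x - of_int (int k * (\<lfloor>x\<rfloor> div int k))\<rfloor>"
    by (simp add: rmod_def)
  also have "\<dots> = \<lfloor>x\<rfloor> - int k * (\<lfloor>x\<rfloor> div int k)"
    by (rule floor_diff_of_int)
  finally show ?thesis
    by (simp add: minus_mult_div_eq_mod)
qed

lemma mod_diff_eq_iff_mod_eq_add:
  fixes a b s m :: int
  assumes "0 \<le> s" "s < m"
  shows "(a - b) mod m = s \<longleftrightarrow> a mod m = (b + s) mod m"
proof -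
  have "(a - b) mod m = s \<longleftrightarrow> (a - b) mod m = s mod m"
    using assms by simp
  also have "\<dots> \<longleftrightarrow> a mod m = (b + s) mod m"
    by (simp add: mod_eq_dvd_iff algebra_simps)
  finally show ?thesis .
qed

lemma exists_shift_many_small_coordinates:
  fixes y :: "nat \<Rightarrow> real"
  assumes "0 < k" and "2 * k \<le> n + 1"
  shows "\<exists>i<k. \<forall>t<k. 2 * t \<le> card {j. j < n \<and> (y j - real i) rmod real k < real t}"
proof -
  define N where "N s = card {j. j < n \<and> \<lfloor>y j\<rfloor> mod int k = int s mod int k}" for s
  have class_iff: "nat \<lfloor>(y j - real i) rmod real k\<rfloor> = s \<longleftrightarrow> \<lfloor>y j\<rfloor> mod int k = int (i + s) mod int k"
    if "s < k" for i j s
  proof -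
    have "\<lfloor>(y j - real i) rmod real k\<rfloor> = (\<lfloor>y j\<rfloor> - int i) mod int k"
      using floor_rmod_of_nat[OF \<open>0 < k\<close>, of "y j - real i"]
      by (metis floor_diff_of_int of_int_of_nat_eq)
    moreover have "0 \<le> (\<lfloor>y j\<rfloor> - int i) mod int k"
      using \<open>0 < k\<close> by simp
    ultimately show ?thesis
      using mod_diff_eq_iff_mod_eq_add[of "int s" "int k" "\<lfloor>y j\<rfloor>" "int i"] that
      by (simp add: nat_eq_iff)
  qed
  have count: "card {j. j < n \<and> (y j - real i) rmod real k < real t} = (\<Sum>s<t. N (i + s))"
    if "t \<le> k" for i t
  proof -
    have "{j. j < n \<and> (y j - real i) rmod real k < real t} =
        {j \<in> {..<n}. nat \<lfloor>(y j - real i) rmod real k\<rfloor> < t}"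
      using \<open>0 < k\<close> by (auto simp: floor_less_iff nat_less_iff rmod_nonneg)
    also have "card \<dots> = (\<Sum>s<t. card {j \<in> {..<n}. nat \<lfloor>(y j - real i) rmod real k\<rfloor> = s})"
      by (rule card_less_eq_sum_card_eq) simp
    also have "\<dots> = (\<Sum>s<t. N (i + s))"
      using that by (intro sum.cong) (simp_all add: N_def class_iff)
    finally show ?thesis .
  qed
  have "(\<Sum>s<k. N s) = n"
    using count[of k 0] \<open>0 < k\<close> by (simp add: rmod_less)
  then have "-1 \<le> (\<Sum>s<k. int (N s) - 2)"
    using assms(2) by (simp add: sum_subtractf flip: of_nat_sum)
  moreover have "int (N (s + k)) - 2 = int (N s) - 2" for s
    by (simp add: N_def)
  ultimately obtain i where "i < k" and nonneg: "\<And>t. t < k \<Longrightarrow> 0 \<le> (\<Sum>s<t. int (N (i + s)) - 2)"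
    using exists_rotation_nonneg_partial_sums[of k "\<lambda>s. int (N s) - 2"] \<open>0 < k\<close> by blast
  have "2 * t \<le> (\<Sum>s<t. N (i + s))" if "t < k" for t
    using nonneg[OF that] by (simp add: sum_subtractf flip: of_nat_sum)
  with \<open>i < k\<close> show ?thesis
    using count by auto
qed

lemma in_X0_if_many_small_coordinates:
  assumes bounded: "\<And>j. j < 2*k-1 \<Longrightarrow> 0 \<le> w j \<and> w j \<le> real k"
    and many: "\<And>t. t < k \<Longrightarrow> 2 * t \<le> card {j. j < 2*k-1 \<and> w j < real t}"
  shows "w \<in> X0 k"
proof -
  let ?n = "2*k-1"
  have "m < card {j. j < ?n \<and> w j \<le> real (m div 2 + 1)}" if "m < ?n" for m
  proof (cases "m div 2 + 1 < k")
    case True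
    have "m < 2 * (m div 2 + 1)"
      by presburger
    also have "\<dots> \<le> card {j. j < ?n \<and> w j < real (m div 2 + 1)}"
      using many[OF True] .
    also have "\<dots> \<le> card {j. j < ?n \<and> w j \<le> real (m div 2 + 1)}"
      by (rule card_mono) auto
    finally show ?thesis .
  next
    case False
    then have "{j. j < ?n \<and> w j \<le> real (m div 2 + 1)} = {..<?n}"
      using bounded by (force simp: not_less)
    with that show ?thesis
      by simp
  qed
  then obtain \<pi> where perm: "\<pi> permutes {..<?n}" and below: "\<forall>m<?n. w (\<pi> m) \<le> real (m div 2 + 1)"
    using exists_permutation_below_bounds[of ?n w "\<lambda>m. real (m div 2 + 1)"] by blast
  have "w \<circ> \<pi> \<in> box k"
    using below bounded permutes_in_image[OF perm] unfolding box_def by auto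
  moreover have "inv \<pi> permutes {..<?n}"
    using perm by (rule permutes_inv)
  moreover have "w = (\<lambda>j. (w \<circ> \<pi>) (inv \<pi> j))"
    using permutes_inverses(1)[OF perm] by simp
  ultimately show ?thesis
    unfolding X0_def by blast
qed

theorem lemmaL:
  fixes k :: nat
  assumes "k \<ge> 1"
  shows "\<forall>y :: nat \<Rightarrow> real. \<exists>i<k. \<exists>z \<in> Xi k i. torus_eq k (2*k-1) y z"
proof
  fix y :: "nat \<Rightarrow> real"
  have "0 < k"
    using assms by simp
  then obtain i where "i < k"
    and many: "\<forall>t<k. 2 * t \<le> card {j. j < 2*k-1 \<and> (y j - real i) rmod real k < real t}"
    using exists_shift_many_small_coordinates[of k "2*k-1" y] by auto
  define w where "w j = (y j - real i) rmod real k" for j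
  have "w \<in> X0 k"
    using many \<open>0 < k\<close>
    by (intro in_X0_if_many_small_coordinates) (auto simp: w_def rmod_nonneg rmod_le)
  then have "(\<lambda>j. w j + real i) \<in> Xi k i"
    unfolding Xi_def by blast
  moreover have "y j - (w j + real i) = of_int \<lfloor>(y j - real i) / real k\<rfloor> * real k" for j
    by (simp add: w_def rmod_def)
  then have "torus_eq k (2*k-1) y (\<lambda>j. w j + real i)"
    unfolding torus_eq_def by blast
  ultimately show "\<exists>i<k. \<exists>z \<in> Xi k i. torus_eq k (2*k-1) y z"
    using \<open>i < k\<close> by blast
qed

end
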